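(* Let $\mathcal{X}=\{X\in\mathbb{R}^{n\times m}: X\ge0 \text{ entrywise},\ X^\top\mathbb{1}_n=\mathbb{1}_m\}$ (column-stochastic matrices) and consider the lift $\varphi\colon(\mathrm{S}^{n-1})^m\to\mathcal{X}$, $\varphi(y_1,\dots,y_m)=[y_1\odot y_1,\dots,y_m\odot y_m]$. It satisfies "local $\Rightarrow$ local" at every point, satisfies "1 $\Rightarrow$ 1" at $(y_1,\dots,y_m)$ if and only if $(y_i)_j\neq0$ for all $i,j$, and satisfies "2 $\Rightarrow$ 1" at every point.
   Context: $\mathbb{1}_n$ is the all-ones vector, $\odot$ the entrywise product, $[x_1,\dots,x_m]$ the $n\times m$ matrix with columns $x_i$, $\mathrm{S}^{n-1}$ the unit sphere. General setting: for a smooth manifold $\mathcal{M}$ and smooth $\varphi\colon\mathcal{M}\to\mathcal{E}$ with image $\mathcal{X}$, and a cost $f$, set $g=f\circ\varphi$. Tangent cone: $\mathrm{T}_x\mathcal{X}=\{\lim (x_i-x)/\tau_i: x_i\in\mathcal{X},\tau_i>0,\tau_i\to0\}$; $K^*=\{u:\langle u,v\rangle\ge0\ \forall v\in K\}$; $x$ is stationary for $f$ on $\mathcal{X}$ if $\nabla f(x)\in(\mathrm{T}_x\mathcal{X})^*$. $y$ is 1-critical for $g$ if $(g\circ c)'(0)=0$ for all smooth curves $c$ in $\mathcal{M}$ with $c(0)=y$; 2-critical if moreover $(g\circ c)''(0)\ge0$ for all such curves. "local $\Rightarrow$ local" at $y$: for every continuous $f\colon\mathcal{X}\to\mathbb{R}$,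 if $y$ is a local minimum of $g$ then $\varphi(y)$ is a local minimum of $f$ on $\mathcal{X}$. "$k\Rightarrow1$" at $y$ ($k=1,2$): for every $k$-times differentiable $f\colon\mathcal{E}\to\mathbb{R}$, if $y$ is $k$-critical for $g$ then $\varphi(y)$ is stationary for $f$ on $\mathcal{X}$. *)

theory Defs
  imports "HOL-Analysis.Analysis"
begin

text \<open>C-infinity curves defined on all of the real line (every smooth germ at 0 is realised
  by such a curve after a reparametrisation that is the identity near 0).\<close>
definition smooth_curve :: "(real \<Rightarrow> 'a::real_normed_vector) \<Rightarrow> bool" where
  "smooth_curve c \<longleftrightarrow> (\<exists>D :: nat \<Rightarrow> real \<Rightarrow> 'a. D 0 = c \<and>
      (\<forall>k t. (D k has_vector_derivative D (Suc k) t) (at t)))"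

definition crit1 :: "'a::real_normed_vector set \<Rightarrow> ('a \<Rightarrow> real) \<Rightarrow> 'a \<Rightarrow> bool" where
  "crit1 M g y \<longleftrightarrow> (\<forall>c. smooth_curve c \<and> (\<forall>t. c t \<in> M) \<and> c 0 = y \<longrightarrow> deriv (g \<circ> c) 0 = 0)"

definition crit2 :: "'a::real_normed_vector set \<Rightarrow> ('a \<Rightarrow> real) \<Rightarrow> 'a \<Rightarrow> bool" where
  "crit2 M g y \<longleftrightarrow> crit1 M g y \<and>
     (\<forall>c. smooth_curve c \<and> (\<forall>t. c t \<in> M) \<and> c 0 = y \<longrightarrow> deriv (deriv (g \<circ> c)) 0 \<ge> 0)"

definition tangent_cone :: "'a::real_normed_vector set \<Rightarrow> 'a \<Rightarrow> 'a set" where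
  "tangent_cone X x = {v. \<exists>(xs :: nat \<Rightarrow> 'a) (\<tau> :: nat \<Rightarrow> real).
      (\<forall>i. xs i \<in> X) \<and> (\<forall>i. \<tau> i > 0) \<and> \<tau> \<longlonglongrightarrow> 0 \<and>
      (\<lambda>i. (xs i - x) /\<^sub>R \<tau> i) \<longlonglongrightarrow> v}"

definition dual_cone :: "'a::real_inner set \<Rightarrow> 'a set" where
  "dual_cone K = {u. \<forall>v\<in>K. inner u v \<ge> 0}"

definition stationary :: "('a::real_inner \<Rightarrow> real) \<Rightarrow> 'a set \<Rightarrow> 'a \<Rightarrow> bool" where
  "stationary f X x \<longleftrightarrow> (\<exists>G. (f has_derivative (\<lambda>v. inner G v)) (at x) \<and>
      G \<in> dual_cone (tangent_cone X x))"

definition once_differentiable :: "('a::real_normed_vector \<Rightarrow> real) \<Rightarrow> bool" where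
  "once_differentiable f \<longleftrightarrow> (\<forall>x. f differentiable at x)"

definition twice_differentiable :: "('a::real_normed_vector \<Rightarrow> real) \<Rightarrow> bool" where
  "twice_differentiable f \<longleftrightarrow> (\<exists>D :: 'a \<Rightarrow> ('a \<Rightarrow>\<^sub>L real).
      (\<forall>x. (f has_derivative blinfun_apply (D x)) (at x)) \<and> (\<forall>x. D differentiable at x))"

definition local_min_on :: "'a::metric_space set \<Rightarrow> ('a \<Rightarrow> real) \<Rightarrow> 'a \<Rightarrow> bool" where
  "local_min_on S h x \<longleftrightarrow> x \<in> S \<and> (\<exists>e>0. \<forall>z\<in>S. dist z x < e \<longrightarrow> h x \<le> h z)"

definition local_to_local ::
  "'a::metric_space set \<Rightarrow> ('a \<Rightarrow> 'b::metric_space) \<Rightarrow> 'b set \<Rightarrow> 'a \<Rightarrow> bool" where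
  "local_to_local M \<phi> X y \<longleftrightarrow> (\<forall>f :: 'b \<Rightarrow> real. continuous_on X f \<longrightarrow>
      local_min_on M (f \<circ> \<phi>) y \<longrightarrow> local_min_on X f (\<phi> y))"

definition one_to_one ::
  "'a::real_normed_vector set \<Rightarrow> ('a \<Rightarrow> 'b::real_inner) \<Rightarrow> 'b set \<Rightarrow> 'a \<Rightarrow> bool" where
  "one_to_one M \<phi> X y \<longleftrightarrow> (\<forall>f :: 'b \<Rightarrow> real. once_differentiable f \<longrightarrow>
      crit1 M (f \<circ> \<phi>) y \<longrightarrow> stationary f X (\<phi> y))"

definition two_to_one ::
  "'a::real_normed_vector set \<Rightarrow> ('a \<Rightarrow> 'b::real_inner) \<Rightarrow> 'b set \<Rightarrow> 'a \<Rightarrow> bool" where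
  "two_to_one M \<phi> X y \<longleftrightarrow> (\<forall>f :: 'b \<Rightarrow> real. twice_differentiable f \<longrightarrow>
      crit2 M (f \<circ> \<phi>) y \<longrightarrow> stationary f X (\<phi> y))"

text \<open>A point (y_1,...,y_m) is Y :: real^'n^'m with Y$i = y_i.  A matrix X in R^{n x m}
  is X :: real^'m^'n with entry X$j$i (row j, column i).\<close>

definition sphere_product :: "(real^'n^'m) set" where
  "sphere_product = {Y. \<forall>i. norm (Y $ i) = 1}"

definition col_stochastic :: "(real^'m^'n) set" where
  "col_stochastic = {X. (\<forall>j i. X $ j $ i \<ge> 0) \<and> (\<forall>i. (\<Sum>j\<in>UNIV. X $ j $ i) = 1)}"

definition sq_lift :: "real^'n^'m \<Rightarrow> real^'m^'n" where
  "sq_lift Y = (\<chi> j i. (Y $ i $ j) * (Y $ i $ j))"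

end

theory Submission
  imports Defs
begin

text \<open>The signed square root is a continuous section of the lift through any Y, which gives
  local \<Rightarrow> local.  The tangent cone of the column-stochastic matrices at X lies in the cone of
  matrices with zero column sums that are nonnegative where X vanishes, so a gradient G lies in
  its dual as soon as, in every column i, G is constant (say \<mu>_i) on the support of X and at
  least \<mu>_i off it.

  Write products of vectors entrywise.  Rotating the i-th column y_i of Y towards a unit vector
  u orthogonal to y_i gives a curve on the product of spheres whose lift has velocity 2 y_i u in
  column i.  First-order criticality therefore makes G_i y_i (G_i the i-th column of G)
  orthogonal to every such u, hence parallel to y_i, i.e. G_ji = \<mu>_i = <G_i, y_i y_i> wherever
  y_ij \<noteq> 0.  If y_ij = 0, rotating towards e_j moves the lift along phi(Y) + sin^2 t (e_j - y_i y_i)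
  in column i, and second-order criticality gives G_ji \<ge> \<mu>_i.  Conversely, when y_ij = 0 the
  linear cost -X_ji is 1-critical (its pullback -y_ij^2 has a double zero) but decreases along
  the feasible direction e_j - e_k in column i, where y_ik \<noteq> 0.\<close>

lemma linear_functional_eq_inner:
  fixes L :: "'a::euclidean_space \<Rightarrow> real"
  assumes "linear L"
  shows "L = inner (adjoint L 1)"
  using adjoint_works[OF assms, of _ 1] by (simp add: fun_eq_iff inner_commute)

lemma deriv_compose_has_vector_derivative:
  fixes f :: "'a::real_inner \<Rightarrow> real"
  assumes "(f has_derivative inner G) (at (\<gamma> t))" and "(\<gamma> has_vector_derivative v) (at t)"
  shows "deriv (f \<circ> \<gamma>) t = inner G v"
proof -
  have "(f \<circ> \<gamma> has_derivative inner G \<circ> (\<lambda>h. h *\<^sub>R v)) (at t)"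
    using assms(2,1) unfolding has_vector_derivative_def by (rule diff_chain_at)
  moreover have "inner G \<circ> (\<lambda>h. h *\<^sub>R v) = (*) (inner G v)"
    by (simp add: fun_eq_iff)
  ultimately show ?thesis
    by (simp add: has_field_derivative_def DERIV_imp_deriv)
qed

lemma deriv2_along_sin_squared:
  fixes f :: "'a::real_normed_vector \<Rightarrow> real"
  assumes Df: "\<And>x. (f has_derivative blinfun_apply (D x)) (at x)"
    and Dd: "\<And>x. D differentiable at x"
  shows "deriv (deriv (\<lambda>t. f (x + (sin t)\<^sup>2 *\<^sub>R w))) 0 = 2 * D x w"
proof -
  define \<gamma> where "\<gamma> t = x + (sin t)\<^sup>2 *\<^sub>R w" for t
  define p where "p t = D (\<gamma> t) w" for t
  have \<gamma>': "(\<gamma> has_vector_derivative (2 * sin t * cos t) *\<^sub>R w) (at t)" for t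
    unfolding \<gamma>_def by (auto intro!: derivative_eq_intros simp: algebra_simps)
  have "((\<lambda>t. f (\<gamma> t)) has_real_derivative (2 * sin t * cos t) * p t) (at t)" for t
  proof -
    have "(f \<circ> \<gamma> has_derivative D (\<gamma> t) \<circ> (\<lambda>h. h *\<^sub>R ((2 * sin t * cos t) *\<^sub>R w))) (at t)"
      using \<gamma>' unfolding has_vector_derivative_def by (rule diff_chain_at) (rule Df)
    moreover have "D (\<gamma> t) \<circ> (\<lambda>h. h *\<^sub>R ((2 * sin t * cos t) *\<^sub>R w)) = (*) ((2 * sin t * cos t) * p t)"
      by (simp add: fun_eq_iff p_def blinfun.scaleR_right)
    ultimately show ?thesis by (simp add: has_field_derivative_def o_def)
  qed
  then have first: "deriv (\<lambda>t. f (\<gamma> t)) = (\<lambda>t. (2 * sin t * cos t) * p t)"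
    by (intro ext DERIV_imp_deriv)
  have "\<gamma> differentiable at 0"
    using \<gamma>'[of 0] unfolding has_vector_derivative_def by (rule differentiableI)
  then have "D \<circ> \<gamma> differentiable at 0"
    using Dd by (rule differentiable_chain_at)
  then have "(\<lambda>L. blinfun_apply L w) \<circ> (D \<circ> \<gamma>) differentiable at 0"
    by (rule differentiable_chain_at)
      (intro bounded_linear_imp_differentiable bounded_linear_apply_blinfun)
  then have p': "(p has_real_derivative deriv p 0) (at 0)"
    unfolding p_def o_def by (simp add: DERIV_deriv_iff_real_differentiable)
  have "((\<lambda>t. 2 * sin t * cos t) has_real_derivative 2) (at 0)"
    by (auto intro!: derivative_eq_intros)
  from DERIV_mult[OF this p']
  have "((\<lambda>t. (2 * sin t * cos t) * p t) has_real_derivative 2 * p 0) (at 0)"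
    by simp
  then have "deriv (deriv (\<lambda>t. f (\<gamma> t))) 0 = 2 * p 0"
    unfolding first by (rule DERIV_imp_deriv)
  then show ?thesis
    by (simp add: \<gamma>_def p_def)
qed

lemma tangent_cone_feasible_direction:
  assumes "\<epsilon> > 0" and "\<And>\<tau>. 0 < \<tau> \<Longrightarrow> \<tau> \<le> \<epsilon> \<Longrightarrow> x + \<tau> *\<^sub>R v \<in> S"
  shows "v \<in> tangent_cone S x"
proof -
  define \<tau> where "\<tau> l = \<epsilon> * inverse (real (Suc l))" for l
  have pos: "\<tau> l > 0" and le: "\<tau> l \<le> \<epsilon>" for l
    using assms(1) by (auto simp: \<tau>_def field_simps)
  have "\<tau> \<longlonglongrightarrow> 0"
    unfolding \<tau>_def by (rule tendsto_mult_right_zero[OF LIMSEQ_inverse_real_of_nat])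
  moreover have "(x + \<tau> l *\<^sub>R v - x) /\<^sub>R \<tau> l = v" for l
    using pos[of l] by simp
  ultimately show ?thesis
    unfolding tangent_cone_def using assms(2) pos le
    by (intro CollectI exI[of _ "\<lambda>l. x + \<tau> l *\<^sub>R v"] exI[of _ \<tau>]) auto
qed

lemma tangent_cone_linear_nonneg:
  fixes L :: "'a::real_normed_vector \<Rightarrow> real"
  assumes L: "bounded_linear L" and S: "\<And>z. z \<in> S \<Longrightarrow> L x \<le> L z"
    and v: "v \<in> tangent_cone S x"
  shows "0 \<le> L v"
proof -
  obtain xs \<tau> where xs: "\<And>l. xs l \<in> S" and \<tau>: "\<And>l. \<tau> l > 0"
    and lim: "(\<lambda>l. (xs l - x) /\<^sub>R \<tau> l) \<longlonglongrightarrow> v"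
    using v unfolding tangent_cone_def by blast
  have quotient_lim: "(\<lambda>l. L ((xs l - x) /\<^sub>R \<tau> l)) \<longlonglongrightarrow> L v"
    using bounded_linear.tendsto[OF L lim] .
  have "0 \<le> L ((xs l - x) /\<^sub>R \<tau> l)" for l
  proof -
    have "L ((xs l - x) /\<^sub>R \<tau> l) = inverse (\<tau> l) * (L (xs l) - L x)"
      using L by (simp add: linear_simps(2,5))
    then show ?thesis
      using S[OF xs] \<tau>[of l] by simp
  qed
  then show ?thesis
    using LIMSEQ_le_const[OF quotient_lim] by blast
qed

lemma stationary_bounded_linear_nonneg:
  assumes f: "bounded_linear f" and "stationary f S x" and v: "v \<in> tangent_cone S x"
  shows "0 \<le> f v"
proof -
  obtain G where fG: "(f has_derivative inner G) (at x)" and G: "G \<in> dual_cone (tangent_cone S x)"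
    using assms(2) unfolding stationary_def by blast
  have "inner G = f"
    using has_derivative_unique[OF fG bounded_linear_imp_has_derivative[OF f]] .
  then show ?thesis
    using G v unfolding dual_cone_def by auto
qed

lemma local_to_local_if_continuous_section:
  fixes \<phi> :: "'a::metric_space \<Rightarrow> 'b::metric_space"
  assumes "\<phi> y \<in> X" and "\<psi> (\<phi> y) = y"
    and "\<And>x. x \<in> X \<Longrightarrow> \<psi> x \<in> M" and "\<And>x. x \<in> X \<Longrightarrow> \<phi> (\<psi> x) = x"
    and "continuous (at (\<phi> y) within X) \<psi>"
  shows "local_to_local M \<phi> X y"
  unfolding local_to_local_def
proof (intro allI impI)
  fix f :: "'b \<Rightarrow> real"
  assume "local_min_on M (f \<circ> \<phi>) y"
  then obtain e where "e > 0" and min: "\<And>z. z \<in> M \<Longrightarrow> dist z y < e \<Longrightarrow> f (\<phi> y) \<le> f (\<phi> z)"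
    unfolding local_min_on_def by auto
  have "\<forall>e>0. \<exists>d>0. \<forall>x\<in>X. dist x (\<phi> y) < d \<longrightarrow> dist (\<psi> x) y < e"
    using assms(5) unfolding continuous_within_eps_delta assms(2) .
  then obtain d where "d > 0" and d: "\<And>x. x \<in> X \<Longrightarrow> dist x (\<phi> y) < d \<Longrightarrow> dist (\<psi> x) y < e"
    using \<open>e > 0\<close> by blast
  show "local_min_on X f (\<phi> y)"
    unfolding local_min_on_def
  proof (intro conjI exI[of _ d] ballI impI)
    fix x assume "x \<in> X" and "dist x (\<phi> y) < d"
    then show "f (\<phi> y) \<le> f x"
      using min[OF assms(3) d] assms(4) by simp
  qed (use assms(1) \<open>d > 0\<close> in auto)
qed

lemma eq_scaleR_if_orthogonal_to_complement:
  fixes g y :: "'a::real_inner"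
  assumes y: "norm y = 1" and orth: "\<And>u. norm u = 1 \<Longrightarrow> inner y u = 0 \<Longrightarrow> inner g u = 0"
  shows "g = inner g y *\<^sub>R y"
proof (rule ccontr)
  define w where "w = g - inner g y *\<^sub>R y"
  assume "g \<noteq> inner g y *\<^sub>R y"
  then have "w \<noteq> 0" by (simp add: w_def)
  have "inner y y = 1" using y by (simp add: norm_eq_1)
  then have "inner y w = 0" by (simp add: w_def inner_diff_right inner_commute)
  then have "inner g (w /\<^sub>R norm w) = 0"
    using \<open>w \<noteq> 0\<close> by (intro orth) simp_all
  moreover have "inner g w = inner w w"
    using \<open>inner y w = 0\<close> by (simp add: w_def inner_diff_left)
  ultimately show False
    using \<open>w \<noteq> 0\<close> by simp
qed

lemma smooth_curve_trigonometric: "smooth_curve (\<lambda>t. A + cos t *\<^sub>R P + sin t *\<^sub>R U)"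
proof -
  define D where "D k t = (if k = 0 then A else 0) + cos (t + real k * (pi/2)) *\<^sub>R P
     + sin (t + real k * (pi/2)) *\<^sub>R U" for k t
  have "(D k has_vector_derivative D (Suc k) t) (at t)" for k t
  proof -
    have shift: "t + real (Suc k) * (pi/2) = (t + real k * (pi/2)) + pi/2"
      by (simp add: algebra_simps)
    have "D (Suc k) t = (- sin (t + real k * (pi/2))) *\<^sub>R P + cos (t + real k * (pi/2)) *\<^sub>R U"
      unfolding D_def shift by (simp add: cos_add sin_add)
    then show ?thesis
      unfolding D_def[abs_def] by (auto intro!: derivative_eq_intros)
  qed
  moreover have "D 0 = (\<lambda>t. A + cos t *\<^sub>R P + sin t *\<^sub>R U)"
    by (simp add: D_def fun_eq_iff)
  ultimately show ?thesis
    unfolding smooth_curve_def by blast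
qed

lemma sphere_product_iff: "Y \<in> sphere_product \<longleftrightarrow> (\<forall>i. (\<Sum>j\<in>UNIV. Y$i$j * Y$i$j) = 1)"
  by (simp add: sphere_product_def norm_eq_1 inner_vec_def)

lemma sq_lift_in_col_stochastic: "Y \<in> sphere_product \<Longrightarrow> sq_lift Y \<in> col_stochastic"
  by (simp add: col_stochastic_def sphere_product_iff sq_lift_def)

lemma sphere_product_column_nonzero:
  assumes "Y \<in> sphere_product"
  obtains j where "Y$i$j \<noteq> 0"
proof -
  have "(\<Sum>j\<in>UNIV. Y$i$j * Y$i$j) = 1"
    using assms by (simp add: sphere_product_iff)
  then have "\<exists>j. Y$i$j \<noteq> 0"
    by (rule contrapos_pp) simp
  then show ?thesis
    using that by blast
qed

lemma tangent_cone_col_stochastic_column_sum: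
  fixes X V :: "real^'m^'n"
  assumes "X \<in> col_stochastic" and "V \<in> tangent_cone col_stochastic X"
  shows "(\<Sum>j\<in>UNIV. V$j$i) = 0"
proof -
  have lin: "bounded_linear (\<lambda>Z::real^'m^'n. \<Sum>j\<in>UNIV. Z$j$i)"
    by (intro bounded_linear_sum bounded_linear_compose[OF bounded_linear_vec_nth bounded_linear_vec_nth])
  have const: "(\<Sum>j\<in>UNIV. Z$j$i) = (\<Sum>j\<in>UNIV. X$j$i)" if "Z \<in> col_stochastic" for Z :: "real^'m^'n"
    using assms(1) that by (simp add: col_stochastic_def)
  have "0 \<le> (\<Sum>j\<in>UNIV. V$j$i)"
    by (rule tangent_cone_linear_nonneg[OF lin _ assms(2)]) (simp add: const)
  moreover have "0 \<le> - (\<Sum>j\<in>UNIV. V$j$i)"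
    by (rule tangent_cone_linear_nonneg[OF bounded_linear_minus[OF lin] _ assms(2)]) (simp add: const)
  ultimately show ?thesis by simp
qed

lemma tangent_cone_col_stochastic_nonneg:
  fixes X V :: "real^'m^'n"
  assumes "V \<in> tangent_cone col_stochastic X" and "X$j$i = 0"
  shows "0 \<le> V$j$i"
  using assms
  by (intro tangent_cone_linear_nonneg[of "\<lambda>Z. Z$j$i" col_stochastic X]
      bounded_linear_compose[OF bounded_linear_vec_nth bounded_linear_vec_nth])
    (auto simp: col_stochastic_def)

lemma dual_cone_tangent_col_stochasticI:
  fixes X G :: "real^'m^'n" and \<mu> :: "'m \<Rightarrow> real"
  assumes X: "X \<in> col_stochastic"
    and supp: "\<And>i j. X$j$i \<noteq> 0 \<Longrightarrow> G$j$i = \<mu> i"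
    and off: "\<And>i j. X$j$i = 0 \<Longrightarrow> \<mu> i \<le> G$j$i"
  shows "G \<in> dual_cone (tangent_cone col_stochastic X)"
  unfolding dual_cone_def
proof (intro CollectI ballI)
  fix V assume V: "V \<in> tangent_cone col_stochastic X"
  have "inner G V = (\<Sum>i\<in>UNIV. \<Sum>j\<in>UNIV. G$j$i * V$j$i)"
    by (simp add: inner_vec_def sum.swap[of _ "UNIV::'n set"])
  also have "\<dots> = (\<Sum>i\<in>UNIV. \<Sum>j\<in>UNIV. (G$j$i - \<mu> i) * V$j$i)"
    using tangent_cone_col_stochastic_column_sum[OF X V]
    by (simp add: left_diff_distrib sum_subtractf sum_distrib_left[symmetric])
  also have "\<dots> \<ge> 0"
  proof (intro sum_nonneg)
    fix i j
    show "0 \<le> (G$j$i - \<mu> i) * V$j$i"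
      using supp[of j i] off[of j i] tangent_cone_col_stochastic_nonneg[OF V, of j i]
      by (cases "X$j$i = 0") simp_all
  qed
  finally show "0 \<le> inner G V" .
qed

lemma local_to_local_sq_lift:
  fixes Y :: "real^'n^'m"
  assumes Y: "Y \<in> sphere_product"
  shows "local_to_local sphere_product sq_lift col_stochastic Y"
proof -
  \<comment> \<open>1 rather than sgn at the zeros of Y, so that every column of \<psi> X is a unit vector\<close>
  define s where "s i j = (if Y$i$j < 0 then -1 else 1 :: real)" for i j
  define \<psi> :: "real^'m^'n \<Rightarrow> real^'n^'m" where "\<psi> X = (\<chi> i j. s i j * sqrt (X$j$i))" for X
  have "\<psi> (sq_lift Y) = Y"
    by (simp add: vec_eq_iff \<psi>_def s_def sq_lift_def)
  moreover have lift: "sq_lift (\<psi> X) = X" if "X \<in> col_stochastic" for X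
    using that by (simp add: vec_eq_iff \<psi>_def s_def sq_lift_def col_stochastic_def)
  moreover have "\<psi> X \<in> sphere_product" if "X \<in> col_stochastic" for X
    using that lift[OF that] by (simp add: sphere_product_iff col_stochastic_def vec_eq_iff sq_lift_def)
  moreover have "continuous_on UNIV \<psi>"
    unfolding \<psi>_def by (intro continuous_intros)
  ultimately show ?thesis
    using sq_lift_in_col_stochastic[OF Y]
    by (intro local_to_local_if_continuous_section[where \<psi> = \<psi>])
      (auto simp: continuous_on_eq_continuous_at intro: continuous_at_imp_continuous_at_within)
qed

definition rotate_column :: "real^'n^'m \<Rightarrow> 'm \<Rightarrow> real^'n \<Rightarrow> real \<Rightarrow> real^'n^'m" where
  "rotate_column Y i u t = Y + (cos t - 1) *\<^sub>R axis i (Y$i) + sin t *\<^sub>R axis i u"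

lemma rotate_column_nth:
  "rotate_column Y i u t $ k = (if k = i then cos t *\<^sub>R Y$i + sin t *\<^sub>R u else Y$k)"
  by (simp add: rotate_column_def axis_def algebra_simps)

lemma rotate_column_0 [simp]: "rotate_column Y i u 0 = Y"
  by (simp add: rotate_column_def)

lemma smooth_curve_rotate_column: "smooth_curve (rotate_column Y i u)"
proof -
  have "rotate_column Y i u = (\<lambda>t. (Y - axis i (Y$i)) + cos t *\<^sub>R axis i (Y$i) + sin t *\<^sub>R axis i u)"
    by (simp add: fun_eq_iff rotate_column_def algebra_simps)
  then show ?thesis
    using smooth_curve_trigonometric by simp
qed

lemma rotate_column_in_sphere_product:
  assumes "Y \<in> sphere_product" and "norm u = 1" and "inner (Y$i) u = 0"
  shows "rotate_column Y i u t \<in> sphere_product"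
proof -
  have "inner (cos t *\<^sub>R Y$i + sin t *\<^sub>R u) (cos t *\<^sub>R Y$i + sin t *\<^sub>R u) = (cos t)\<^sup>2 + (sin t)\<^sup>2"
    using assms by (simp add: sphere_product_def norm_eq_1 inner_add_left inner_add_right
        inner_commute power2_eq_square)
  then show ?thesis
    using assms(1) by (simp add: sphere_product_def rotate_column_nth norm_eq_1)
qed

text \<open>On real vectors the product * is entrywise, and transpose (axis i v) is the matrix whose
  i-th column is v and whose other columns vanish.\<close>

lemma sq_lift_rotate_column:
  "sq_lift (rotate_column Y i u t) = sq_lift Y
     + (sin t)\<^sup>2 *\<^sub>R transpose (axis i (u * u - Y$i * Y$i))
     + (2 * sin t * cos t) *\<^sub>R transpose (axis i (Y$i * u))"
proof -
  have "(cos t * y + sin t * v) * (cos t * y + sin t * v)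
      = y * y + (sin t)\<^sup>2 * (v * v - y * y) + 2 * sin t * cos t * (y * v)" for y v :: real
    using sin_cos_squared_add[of t] by algebra
  then show ?thesis
    by (simp add: vec_eq_iff sq_lift_def rotate_column_nth transpose_def axis_def)
qed

lemma inner_transpose_axis:
  fixes G :: "real^'m^'n"
  shows "inner G (transpose (axis i v)) = inner (column i G) v"
proof -
  have entry: "axis i v $ k $ j = (if k = i then v$j else 0)" for k j
    by (simp add: axis_def)
  show ?thesis
    unfolding inner_vec_def transpose_def column_def
    by (simp add: entry if_distrib[of "(*) _"] cong: if_cong)
qed

lemma crit1_rotate_column:
  fixes Y :: "real^'n^'m" and f :: "real^'m^'n \<Rightarrow> real"
  assumes Y: "Y \<in> sphere_product" and u: "norm u = 1" "inner (Y$i) u = 0"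
    and fG: "(f has_derivative inner G) (at (sq_lift Y))"
    and crit: "crit1 sphere_product (f \<circ> sq_lift) Y"
  shows "inner (column i G * Y$i) u = 0"
proof -
  let ?C = "rotate_column Y i u"
  have "((\<lambda>t. sq_lift (?C t)) has_vector_derivative 2 *\<^sub>R transpose (axis i (Y$i * u))) (at 0)"
    unfolding sq_lift_rotate_column by (auto intro!: derivative_eq_intros)
  then have "deriv ((f \<circ> sq_lift) \<circ> ?C) 0 = inner G (2 *\<^sub>R transpose (axis i (Y$i * u)))"
    using deriv_compose_has_vector_derivative[of f G "\<lambda>t. sq_lift (?C t)" 0] fG
    by (simp add: o_def)
  moreover have "deriv ((f \<circ> sq_lift) \<circ> ?C) 0 = 0"
    using crit smooth_curve_rotate_column rotate_column_in_sphere_product[OF Y u] rotate_column_0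
    unfolding crit1_def by blast
  ultimately have "inner G (transpose (axis i (Y$i * u))) = 0"
    by simp
  then show ?thesis
    unfolding inner_transpose_axis by (simp add: inner_vec_def ac_simps)
qed

lemma crit1_gradient_on_support:
  fixes Y :: "real^'n^'m" and f :: "real^'m^'n \<Rightarrow> real"
  assumes Y: "Y \<in> sphere_product"
    and fG: "(f has_derivative inner G) (at (sq_lift Y))"
    and crit: "crit1 sphere_product (f \<circ> sq_lift) Y"
    and nz: "Y$i$j \<noteq> 0"
  shows "G$j$i = inner (column i G) (Y$i * Y$i)"
proof -
  let ?g = "column i G * Y$i"
  have "norm (Y$i) = 1"
    using Y by (simp add: sphere_product_def)
  then have "?g = inner ?g (Y$i) *\<^sub>R Y$i"
    using crit1_rotate_column[OF Y _ _ fG crit] by (rule eq_scaleR_if_orthogonal_to_complement)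
  then have "?g $ j = (inner ?g (Y$i) *\<^sub>R Y$i) $ j"
    by (rule arg_cong)
  then have "G$j$i * Y$i$j = inner ?g (Y$i) * Y$i$j"
    by (simp add: column_def)
  moreover have "inner ?g (Y$i) = inner (column i G) (Y$i * Y$i)"
    by (simp add: inner_vec_def ac_simps)
  ultimately show ?thesis
    using nz by simp
qed

lemma crit2_gradient_off_support:
  fixes Y :: "real^'n^'m" and f :: "real^'m^'n \<Rightarrow> real"
  assumes Y: "Y \<in> sphere_product"
    and Df: "\<And>x. (f has_derivative blinfun_apply (D x)) (at x)"
    and Dd: "\<And>x. D differentiable at x"
    and G: "blinfun_apply (D (sq_lift Y)) = inner G"
    and crit: "crit2 sphere_product (f \<circ> sq_lift) Y"
    and zero: "Y$i$j = 0"
  shows "inner (column i G) (Y$i * Y$i) \<le> G$j$i"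
proof -
  let ?u = "axis j 1 :: real^'n"
  let ?W = "transpose (axis i (?u * ?u - Y$i * Y$i))"
  have u: "norm ?u = 1" "inner (Y$i) ?u = 0"
    using zero by (simp_all add: inner_axis)
  have "?u * ?u = ?u"
    by (simp add: vec_eq_iff axis_def)
  have "transpose (axis i (Y$i * ?u)) = 0"
    using zero by (simp add: vec_eq_iff transpose_def axis_def)
  then have lift: "(f \<circ> sq_lift) \<circ> rotate_column Y i ?u = (\<lambda>t. f (sq_lift Y + (sin t)\<^sup>2 *\<^sub>R ?W))"
    by (simp add: fun_eq_iff sq_lift_rotate_column)
  have "0 \<le> deriv (deriv ((f \<circ> sq_lift) \<circ> rotate_column Y i ?u)) 0"
    using crit smooth_curve_rotate_column rotate_column_in_sphere_product[OF Y u] rotate_column_0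
    unfolding crit2_def by blast
  also have "\<dots> = 2 * inner G ?W"
    unfolding lift deriv2_along_sin_squared[OF Df Dd] G ..
  also have "inner G ?W = G$j$i - inner (column i G) (Y$i * Y$i)"
    unfolding inner_transpose_axis \<open>?u * ?u = ?u\<close> by (simp add: inner_diff_right inner_axis column_def)
  finally show ?thesis by simp
qed

lemma stationary_sq_lift_if_gradient_off_support:
  fixes Y :: "real^'n^'m" and f :: "real^'m^'n \<Rightarrow> real"
  assumes Y: "Y \<in> sphere_product"
    and fG: "(f has_derivative inner G) (at (sq_lift Y))"
    and crit: "crit1 sphere_product (f \<circ> sq_lift) Y"
    and off: "\<And>i j. Y$i$j = 0 \<Longrightarrow> inner (column i G) (Y$i * Y$i) \<le> G$j$i"
  shows "stationary f col_stochastic (sq_lift Y)"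
  unfolding stationary_def
proof (intro exI conjI)
  show "(f has_derivative inner G) (at (sq_lift Y))"
    by (rule fG)
  show "G \<in> dual_cone (tangent_cone col_stochastic (sq_lift Y))"
    using crit1_gradient_on_support[OF Y fG crit] off
    by (intro dual_cone_tangent_col_stochasticI[OF sq_lift_in_col_stochastic[OF Y],
          where \<mu> = "\<lambda>i. inner (column i G) (Y$i * Y$i)"]) (auto simp: sq_lift_def)
qed

lemma one_to_one_sq_lift:
  fixes Y :: "real^'n^'m"
  assumes Y: "Y \<in> sphere_product" and nz: "\<forall>i j. Y$i$j \<noteq> 0"
  shows "one_to_one sphere_product sq_lift col_stochastic Y"
  unfolding one_to_one_def
proof (intro allI impI)
  fix f :: "real^'m^'n \<Rightarrow> real"
  assume "once_differentiable f" and crit: "crit1 sphere_product (f \<circ> sq_lift) Y"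
  then obtain L where L: "(f has_derivative L) (at (sq_lift Y))"
    unfolding once_differentiable_def differentiable_def by blast
  then have "(f has_derivative inner (adjoint L 1)) (at (sq_lift Y))"
    using linear_functional_eq_inner[OF has_derivative_linear[OF L]] by simp
  then show "stationary f col_stochastic (sq_lift Y)"
    using stationary_sq_lift_if_gradient_off_support[OF Y _ crit] nz by blast
qed

lemma two_to_one_sq_lift:
  fixes Y :: "real^'n^'m"
  assumes Y: "Y \<in> sphere_product"
  shows "two_to_one sphere_product sq_lift col_stochastic Y"
  unfolding two_to_one_def
proof (intro allI impI)
  fix f :: "real^'m^'n \<Rightarrow> real"
  assume "twice_differentiable f" and crit: "crit2 sphere_product (f \<circ> sq_lift) Y"
  then obtain D where Df: "\<And>x. (f has_derivative blinfun_apply (D x)) (at x)"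
    and Dd: "\<And>x. D differentiable at x"
    unfolding twice_differentiable_def by blast
  define G where "G = adjoint (blinfun_apply (D (sq_lift Y))) 1"
  have G: "blinfun_apply (D (sq_lift Y)) = inner G"
    unfolding G_def
    by (intro linear_functional_eq_inner bounded_linear.linear[OF blinfun.bounded_linear_right])
  have fG: "(f has_derivative inner G) (at (sq_lift Y))"
    using Df[of "sq_lift Y"] unfolding G .
  have "crit1 sphere_product (f \<circ> sq_lift) Y"
    using crit by (simp add: crit2_def)
  then show "stationary f col_stochastic (sq_lift Y)"
    by (rule stationary_sq_lift_if_gradient_off_support[OF Y fG _
          crit2_gradient_off_support[OF Y Df Dd G crit]])
qed

lemma col_stochastic_move_mass:
  fixes X :: "real^'m^'n"
  assumes X: "X \<in> col_stochastic" and "j \<noteq> k" and "0 \<le> \<tau>" and "\<tau> \<le> X$k$i"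
  shows "X + \<tau> *\<^sub>R transpose (axis i (axis j 1 - axis k 1)) \<in> col_stochastic"
proof -
  let ?V = "transpose (axis i (axis j 1 - axis k 1)) :: real^'m^'n"
  have entry: "?V $ a $ b = (if b = i then axis j 1 $ a - axis k 1 $ a else 0)" for a b
    by (simp add: transpose_def axis_def)
  have "(\<Sum>a\<in>UNIV. ?V $ a $ b) = 0" for b
    unfolding entry by (cases "b = i") (simp_all add: sum_subtractf axis_def)
  then have sum_eq: "(\<Sum>a\<in>UNIV. (X + \<tau> *\<^sub>R ?V) $ a $ b) = (\<Sum>a\<in>UNIV. X $ a $ b)" for b
    by (simp add: sum.distrib sum_distrib_left[symmetric])
  have nonneg: "0 \<le> (X + \<tau> *\<^sub>R ?V) $ a $ b" for a b
  proof -
    have "0 \<le> X $ a $ b"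
      using X by (simp add: col_stochastic_def)
    then show ?thesis
      using assms(2-4) unfolding vector_add_component vector_scaleR_component entry
      by (auto simp: axis_def)
  qed
  show ?thesis
    using X nonneg sum_eq unfolding col_stochastic_def mem_Collect_eq by metis
qed

lemma crit1_neg_entry_sq_lift:
  fixes Y :: "real^'n^'m"
  assumes zero: "Y$i$j = 0"
  shows "crit1 M ((\<lambda>X. - X$j$i) \<circ> sq_lift) Y"
  unfolding crit1_def
proof (intro allI impI)
  fix c :: "real \<Rightarrow> real^'n^'m"
  assume "smooth_curve c \<and> (\<forall>t. c t \<in> M) \<and> c 0 = Y"
  then obtain c' where c': "(c has_vector_derivative c') (at 0)" and "c 0 = Y"
    unfolding smooth_curve_def by metis
  then have "((\<lambda>t. c t $ i $ j) has_real_derivative c' $ i $ j) (at 0)"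
    using bounded_linear.has_vector_derivative[OF
        bounded_linear_compose[OF bounded_linear_vec_nth bounded_linear_vec_nth] c']
    by (simp add: has_real_derivative_iff_has_vector_derivative)
  then have "((\<lambda>t. - (c t $ i $ j * c t $ i $ j)) has_real_derivative
      - (c' $ i $ j * c 0 $ i $ j + c' $ i $ j * c 0 $ i $ j)) (at 0)"
    by (intro DERIV_minus DERIV_mult)
  then show "deriv ((\<lambda>X. - X$j$i) \<circ> sq_lift \<circ> c) 0 = 0"
    using \<open>c 0 = Y\<close> zero by (simp add: DERIV_imp_deriv sq_lift_def o_def)
qed

lemma not_one_to_one_sq_lift:
  fixes Y :: "real^'n^'m"
  assumes Y: "Y \<in> sphere_product" and zero: "Y$i$j = 0"
  shows "\<not> one_to_one sphere_product sq_lift col_stochastic Y"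
proof
  define f :: "real^'m^'n \<Rightarrow> real" where "f = (\<lambda>X. - X$j$i)"
  have lin: "bounded_linear f"
    unfolding f_def
    by (intro bounded_linear_minus bounded_linear_compose[OF bounded_linear_vec_nth bounded_linear_vec_nth])
  have "crit1 sphere_product (f \<circ> sq_lift) Y"
    unfolding f_def using zero by (rule crit1_neg_entry_sq_lift)
  moreover assume "one_to_one sphere_product sq_lift col_stochastic Y"
  ultimately have stat: "stationary f col_stochastic (sq_lift Y)"
    using bounded_linear_imp_differentiable[OF lin]
    unfolding one_to_one_def once_differentiable_def by blast
  obtain k where nz: "Y$i$k \<noteq> 0"
    using sphere_product_column_nonzero[OF Y] .
  then have "j \<noteq> k"
    using zero by auto
  have pos: "0 < sq_lift Y $ k $ i"
    using nz by (simp add: sq_lift_def) (metis not_real_square_gt_zero)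
  let ?V = "transpose (axis i (axis j 1 - axis k 1)) :: real^'m^'n"
  have "?V \<in> tangent_cone col_stochastic (sq_lift Y)"
    using pos col_stochastic_move_mass[OF sq_lift_in_col_stochastic[OF Y] \<open>j \<noteq> k\<close>]
    by (intro tangent_cone_feasible_direction) auto
  then have "0 \<le> f ?V"
    by (rule stationary_bounded_linear_nonneg[OF lin stat])
  moreover have "f ?V = -1"
    using \<open>j \<noteq> k\<close> by (simp add: f_def transpose_def axis_def)
  ultimately show False
    by simp
qed

theorem proposition2p6:
  shows "(\<forall>Y \<in> (sphere_product :: (real^'n^'m) set).
            local_to_local sphere_product sq_lift col_stochastic Y)
       \<and> (\<forall>Y \<in> (sphere_product :: (real^'n^'m) set).
            one_to_one sphere_product sq_lift col_stochastic Y \<longleftrightarrow> (\<forall>i j. Y $ i $ j \<noteq> 0))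
       \<and> (\<forall>Y \<in> (sphere_product :: (real^'n^'m) set).
            two_to_one sphere_product sq_lift col_stochastic Y)"
  using local_to_local_sq_lift one_to_one_sq_lift not_one_to_one_sq_lift two_to_one_sq_lift
  by blast

end
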